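(* Let $m\ge 2$, let $C=uRM(m)$ (defined in the context) with base qubits $b_0,\dots,b_m$ and parity labels $L(q)$. For each $i\in\{0,\dots,m\}$, the logical operator $i$ of $C$, i.e. the codeword $x^{(i)}\in C$ with $x^{(i)}_{b_i}=1$ and $x^{(i)}_{b_j}=0$ for $j\ne i$ (whose support is the set of qubits $q$ with $i\in L(q)$), has weight exactly $2^{m-1}$.
   Context: Let $a=\lceil m/2\rceil$, $b=\lfloor m/2\rfloor$. Place $2^m$ bits (qubits) on a grid with $2^b$ rows and $2^a$ columns, positions $(i,j)$, row $1$ on top, column $1$ leftmost. Bulk checks: for $1\le i<2^b$, $1\le j<2^a$, the set $\{(i,j),(i+1,j),(i,j+1),(i+1,j+1)\}$. Boundary checks: for a line of $L=2^n$ positions $1,\dots,L$, each $s\in\{1,\dots,n-1\}$, $w=2^s$, and integer $t$ with $-L/(2w)+1\le t\le L/(2w)-1$, $S(w,t)=\{L/2-w/2+wt,\ L/2-w/2+wt+1,\ L/2+w/2+wt,\ L/2+w/2+wt+1\}$; these with $n=a$ on the top row ($j\mapsto(1,j)$) and with $n=b$ on the leftmost column ($i\mapsto(i,1)$). $C=uRM(m)$ is the set of $x\in\mathbb{F}_2^{2^m}$ with even sum over every check; it has dimension $m+1$. Base qubits are $m+1$ positions $b_0,\dots,b_m$ such that $x\mapsto(x_{b_0},\dots,x_{b_m})$ is a bijection $C\to\mathbb{F}_2^{m+1}$. The parity label of a qubit $q$ is the unique $L(q)\subseteq\{0,\dots,m\}$ with $x_q=\sum_{i\in L(q)}x_{b_i}$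 for all $x\in C$. *)

theory Defs
  imports Main "HOL-Library.FuncSet"
begin

definition colexp :: "nat \<Rightarrow> nat" where "colexp m = (m + 1) div 2"
definition rowexp :: "nat \<Rightarrow> nat" where "rowexp m = m div 2"

definition grid :: "nat \<Rightarrow> (nat \<times> nat) set" where
  "grid m = {1..2^rowexp m} \<times> {1..2^colexp m}"

definition bulk_checks :: "nat \<Rightarrow> (nat \<times> nat) set set" where
  "bulk_checks m = {{(i,j),(i+1,j),(i,j+1),(i+1,j+1)} | i j.
      1 \<le> i \<and> i < 2^rowexp m \<and> 1 \<le> j \<and> j < 2^colexp m}"

(* boundary checks S(w,t) on a line of L = 2^n positions *)
definition line_checks :: "nat \<Rightarrow> int set set" where
  "line_checks n = {(let L = (2::int)^n; w = (2::int)^s in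
        {L div 2 - w div 2 + w*t, L div 2 - w div 2 + w*t + 1,
         L div 2 + w div 2 + w*t, L div 2 + w div 2 + w*t + 1}) | s t.
      1 \<le> s \<and> s \<le> n - 1 \<and>
      - ((2::int)^n div (2 * 2^s)) + 1 \<le> t \<and> t \<le> (2::int)^n div (2 * 2^s) - 1}"

definition checks :: "nat \<Rightarrow> (nat \<times> nat) set set" where
  "checks m = bulk_checks m
     \<union> {(\<lambda>j. (1::nat, nat j)) ` S | S. S \<in> line_checks (colexp m)}
     \<union> {(\<lambda>i. (nat i, 1::nat)) ` S | S. S \<in> line_checks (rowexp m)}"

(* codewords as supports: x_q = 1 iff q \<in> X *)
definition uRM :: "nat \<Rightarrow> (nat \<times> nat) set set" where
  "uRM m = {X. X \<subseteq> grid m \<and> (\<forall>Q \<in> checks m. even (card (X \<inter> Q)))}"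

definition is_base :: "nat \<Rightarrow> (nat \<Rightarrow> nat \<times> nat) \<Rightarrow> bool" where
  "is_base m bq \<longleftrightarrow> bij_betw (\<lambda>X. restrict (\<lambda>k. bq k \<in> X) {0..m}) (uRM m)
                        ({0..m} \<rightarrow>\<^sub>E (UNIV :: bool set))"

end

theory Submission
  imports Defs
begin

(* The bulk checks force a codeword X to be the sum of a row pattern and a column pattern,
   x(a,b) = x(a,1) + x(1,b) + x(1,1) over F_2.  On a boundary line of length 2^n the checks say that
   whether the pattern changes between positions p and p+1 depends only on the 2-adic valuation
   of p; if it changes at odd p the pattern alternates, otherwise it is constant on pairs and one
   can halve the line.  So each boundary pattern is constant or balanced, and hence every
   codeword is empty, the whole grid, or of weight 2^(m-1).  A logical operator contains b_i but
   not the base qubits b_j (j \<noteq> i), which lie on the grid, so it is of the third kind. *)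

definition flip_at :: "(nat \<Rightarrow> bool) \<Rightarrow> nat \<Rightarrow> bool" where
  "flip_at g p \<longleftrightarrow> g p \<noteq> g (Suc p)"

(* The boundary check S(2^(v+1), t) is {p, p+1, q, q+1} with p, q = p + 2^(v+1) consecutive odd
   multiples of 2^v (lemma odd_multiples_in_line_checks), so its parity says exactly this. *)
definition flips_by_valuation :: "nat \<Rightarrow> (nat \<Rightarrow> bool) \<Rightarrow> bool" where
  "flips_by_valuation n g \<longleftrightarrow>
     (\<forall>v k. 2^v * (2*k + 3) < (2::nat)^n \<longrightarrow> flip_at g (2^v * (2*k + 1)) = flip_at g (2^v * (2*k + 3)))"

lemma flip_at_odd_multiple:
  assumes "flips_by_valuation n g" "2^v * (2*k + 1) < (2::nat)^n"
  shows "flip_at g (2^v * (2*k + 1)) = flip_at g (2^v)"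
  using assms(2)
proof (induction k)
  case (Suc k)
  have k3: "2 * Suc k + 1 = 2*k + 3" by simp
  have next_lt: "2^v * (2*k + 3) < (2::nat)^n"
    using Suc.prems unfolding k3 .
  then have "2^v * (2*k + 1) < (2::nat)^n"
    by (meson add_le_mono le_less_trans mult_le_mono2 order.refl one_le_numeral)
  with Suc.IH have "flip_at g (2^v * (2*k + 1)) = flip_at g (2^v)" .
  moreover have "flip_at g (2^v * (2*k + 1)) = flip_at g (2^v * (2*k + 3))"
    using assms(1) next_lt unfolding flips_by_valuation_def by blast
  ultimately show ?case
    unfolding k3 by simp
qed simp

lemma card_filter_pairs:
  "card {j \<in> {1..2*(N::nat)}. P j} = (\<Sum>k<N. of_bool (P (2*k + 1)) + of_bool (P (2*k + 2)) :: nat)"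
proof -
  have "card {j \<in> {1..2*N}. P j} = (\<Sum>j = 1..2*N. of_bool (P j) :: nat)"
    by (simp add: Int_def)
  also have "\<dots> = (\<Sum>k<N. of_bool (P (2*k + 1)) + of_bool (P (2*k + 2)))"
    by (induction N) simp_all
  finally show ?thesis .
qed

lemma card_filter_alternating_pairs:
  assumes "\<forall>k<N. g (2*k + 1) \<noteq> g (2*k + 2)"
  shows "card {j \<in> {1..2*N}. g j} = N"
proof -
  have "card {j \<in> {1..2*N}. g j} = (\<Sum>k<N. 1)"
    unfolding card_filter_pairs using assms by (intro sum.cong) auto
  then show ?thesis by simp
qed

lemma constant_or_balanced_doubled:
  assumes pairs: "\<forall>k<N. g (2*k + 1) = h (Suc k) \<and> g (2*k + 2) = h (Suc k)"
    and h: "(\<forall>j\<in>{1..N}. h j = h 1) \<or> 2 * card {j \<in> {1..N}. h j} = N"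
  shows "(\<forall>j\<in>{1..2*N}. g j = g 1) \<or> 2 * card {j \<in> {1..2*N}. g j} = 2*N"
  using h
proof
  assume h_const: "\<forall>j\<in>{1..N}. h j = h 1"
  have "g j = g 1" if "j \<in> {1..2*N}" for j
  proof -
    define k where "k = (j - 1) div 2"
    from that have "1 \<le> j" "j \<le> 2*N"
      by simp_all
    then have k: "k < N" "j = 2*k + 1 \<or> j = 2*k + 2"
      unfolding k_def by presburger+
    have "g j = h (Suc k)"
      using pairs[rule_format, OF k(1)] k(2) by auto
    also have "\<dots> = h 1"
      by (rule h_const[rule_format]) (use k(1) in simp)
    also have "\<dots> = g 1"
      using pairs[rule_format, of 0] k(1) by simp
    finally show ?thesis .
  qed
  then show ?thesis by blast
next
  assume h_bal: "2 * card {j \<in> {1..N}. h j} = N"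
  have "card {j \<in> {1..2*N}. g j} = (\<Sum>k<N. 2 * of_bool (h (Suc k)))"
    unfolding card_filter_pairs using pairs by (intro sum.cong) auto
  also have "\<dots> = 2 * (\<Sum>j = 1..N. of_bool (h j))"
    by (simp add: sum_distrib_left sum.atLeast1_atMost_eq)
  also have "\<dots> = 2 * card {j \<in> {1..N}. h j}"
    by (simp add: Int_def)
  finally show ?thesis
    using h_bal by simp
qed

lemma flips_by_valuation_halve:
  assumes g: "flips_by_valuation (Suc n) g" and pairs: "\<forall>k<2^n. g (2*k + 1) = g (2*k + 2)"
  shows "flips_by_valuation n (\<lambda>k. g (2*k))"
  unfolding flips_by_valuation_def
proof (intro allI impI)
  fix v k assume lt: "2^v * (2*k + 3) < (2::nat)^n"
  have flip_half: "flip_at (\<lambda>k. g (2*k)) p = flip_at g (2*p)" if "p < 2^n" for p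
    using pairs that by (simp add: flip_at_def)
  have "2^v * (2*k + 1) < (2::nat)^n"
    using lt by (meson add_le_mono le_less_trans mult_le_mono2 order.refl one_le_numeral)
  moreover have "2^Suc v * (2*k + 3) < (2::nat)^Suc n"
    using lt by simp
  then have "flip_at g (2^Suc v * (2*k + 1)) = flip_at g (2^Suc v * (2*k + 3))"
    using g unfolding flips_by_valuation_def by blast
  then have "flip_at g (2 * (2^v * (2*k + 1))) = flip_at g (2 * (2^v * (2*k + 3)))"
    by (simp only: power_Suc mult.assoc)
  ultimately show "flip_at (\<lambda>k. g (2*k)) (2^v * (2*k + 1)) = flip_at (\<lambda>k. g (2*k)) (2^v * (2*k + 3))"
    using lt by (simp add: flip_half)
qed

lemma flips_by_valuation_constant_or_balanced:
  assumes "flips_by_valuation n g"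
  shows "(\<forall>j\<in>{1..2^n}. g j = g 1) \<or> 2 * card {j \<in> {1..2^n}. g j} = 2^n"
  using assms
proof (induction n arbitrary: g)
  case (Suc n)
  have pair_flip: "flip_at g (2*k + 1) = flip_at g 1" if "k < 2^n" for k
    using flip_at_odd_multiple[OF Suc.prems, of 0 k] that by simp
  show ?case
  proof (cases "flip_at g 1")
    case True
    with pair_flip have "\<forall>k<2^n. g (2*k + 1) \<noteq> g (2*k + 2)"
      by (simp add: flip_at_def)
    then show ?thesis
      using card_filter_alternating_pairs by simp
  next
    case False
    with pair_flip have pairs: "\<forall>k<2^n. g (2*k + 1) = g (2*k + 2)"
      by (simp add: flip_at_def)
    then have "flips_by_valuation n (\<lambda>k. g (2*k))"
      using Suc.prems by (rule flips_by_valuation_halve[rotated])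
    then have "(\<forall>j\<in>{1..2^n}. g (2*j) = g (2*1)) \<or> 2 * card {j \<in> {1..2^n}. g (2*j)} = 2^n"
      by (rule Suc.IH)
    moreover have "\<forall>k<2^n. g (2*k + 1) = g (2 * Suc k) \<and> g (2*k + 2) = g (2 * Suc k)"
      using pairs by simp
    ultimately show ?thesis
      using constant_or_balanced_doubled[of "2^n" g "\<lambda>k. g (2*k)"] by simp
  qed
qed simp

lemma even_card_Int_four_iff:
  assumes "distinct [a, b, c, d]"
  shows "even (card (X \<inter> {a, b, c, d})) \<longleftrightarrow> ((a \<in> X \<longleftrightarrow> b \<in> X) \<longleftrightarrow> (c \<in> X \<longleftrightarrow> d \<in> X))"
  using assms
  by (cases "a \<in> X"; cases "b \<in> X"; cases "c \<in> X"; cases "d \<in> X") (auto simp: Int_insert_right)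

lemma odd_multiples_in_line_checks:
  assumes lt: "(2::nat)^v * (2*k + 3) < 2^n"
  shows "int ` {2^v * (2*k + 1), 2^v * (2*k + 1) + 1, 2^v * (2*k + 3), 2^v * (2*k + 3) + 1} \<in> line_checks n"
proof -
  have "\<not> n \<le> v + 1"
  proof
    assume "n \<le> v + 1"
    then have "(2::nat)^n \<le> 2^v * (2*k + 3)"
      by (simp add: le_trans[OF power_increasing[of n "v+1" 2]])
    with lt show False by simp
  qed
  then obtain r where n: "n = v + 2 + r"
    by (intro that[of "n - (v + 2)"]) simp
  define A where "A = (2::int)^v"
  define B where "B = (2::int)^r"
  have A: "A > 0" and B: "B > 0"
    by (simp_all add: A_def B_def)
  have L: "(2::int)^n = 4*A*B" and W: "(2::int)^(v+1) = 2*A"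
    by (simp_all add: n power_add A_def B_def)
  have "2*k + 3 < 4 * (2::nat)^r"
    using lt by (simp add: n power_add mult.assoc)
  then have "int (2*k + 3) < int (4 * 2^r)"
    by (subst of_nat_less_iff)
  then have k: "2 * int k + 3 < 4*B"
    by (simp add: B_def)
  \<comment> \<open>chosen so that L/2 - w/2 + w t = 2^v (2k + 1) for L = 2^n, w = 2^(v+1)\<close>
  define t where "t = int k + 1 - B"
  have half: "4*A*B div (2*(2*A)) = B"
    using A by simp
  show ?thesis
    unfolding line_checks_def mem_Collect_eq
  proof (intro exI conjI)
    show "int ` {2^v * (2*k + 1), 2^v * (2*k + 1) + 1, 2^v * (2*k + 3), 2^v * (2*k + 3) + 1} =
      (let L = (2::int)^n; w = 2^(v+1) in
        {L div 2 - w div 2 + w*t, L div 2 - w div 2 + w*t + 1,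
         L div 2 + w div 2 + w*t, L div 2 + w div 2 + w*t + 1})"
      unfolding Let_def L W by (simp add: t_def A_def algebra_simps)
  qed (unfold L W half, use n k in \<open>simp_all add: t_def\<close>)
qed

lemma line_checks_flips_by_valuation:
  assumes inj: "inj e" and even: "\<forall>S\<in>line_checks n. even (card (X \<inter> (\<lambda>j. e (nat j)) ` S))"
  shows "flips_by_valuation n (\<lambda>j. e j \<in> X)"
  unfolding flips_by_valuation_def
proof (intro allI impI)
  fix v k assume lt: "(2::nat)^v * (2*k + 3) < 2^n"
  define p where "p = (2::nat)^v * (2*k + 1)"
  define q where "q = (2::nat)^v * (2*k + 3)"
  have "q = p + 2 * 2^v"
    unfolding p_def q_def by (simp add: algebra_simps)
  then have "distinct [e p, e (p + 1), e q, e (q + 1)]"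
    by (simp add: inj_eq[OF inj])
  moreover have "(\<lambda>j. e (nat j)) ` int ` {p, p + 1, q, q + 1} = {e p, e (p + 1), e q, e (q + 1)}"
    by (simp add: nat_add_distrib)
  moreover have "even (card (X \<inter> (\<lambda>j. e (nat j)) ` int ` {p, p + 1, q, q + 1}))"
    using even odd_multiples_in_line_checks[OF lt] unfolding p_def q_def by blast
  ultimately have "(e p \<in> X \<longleftrightarrow> e (p + 1) \<in> X) \<longleftrightarrow> (e q \<in> X \<longleftrightarrow> e (q + 1) \<in> X)"
    using even_card_Int_four_iff by metis
  then show "flip_at (\<lambda>j. e j \<in> X) p = flip_at (\<lambda>j. e j \<in> X) q"
    by (simp add: flip_at_def)
qed

lemma grid_parity_decomposition:
  fixes x :: "nat \<Rightarrow> nat \<Rightarrow> bool"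
  assumes bulk: "\<And>a b. 1 \<le> a \<Longrightarrow> a < R \<Longrightarrow> 1 \<le> b \<Longrightarrow> b < C \<Longrightarrow>
      (x a b \<longleftrightarrow> x (Suc a) b) \<longleftrightarrow> (x a (Suc b) \<longleftrightarrow> x (Suc a) (Suc b))"
    and a: "a \<in> {1..R}" and b: "b \<in> {1..C}"
  shows "x a b \<longleftrightarrow> (x a 1 \<noteq> (x 1 b \<noteq> x 1 1))"
proof -
  have rows: "(x a' b \<longleftrightarrow> x (Suc a') b) \<longleftrightarrow> (x a' 1 \<longleftrightarrow> x (Suc a') 1)" if "1 \<le> a'" "a' < R" for a'
  proof -
    from b have "1 \<le> b" by simp
    then show ?thesis
    proof (induction b rule: dec_induct)
      case (step b')
      then show ?case
        using bulk[OF that, of b'] b by simp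
    qed simp
  qed
  from a have "1 \<le> a" by simp
  then have "(x a b \<longleftrightarrow> x 1 b) \<longleftrightarrow> (x a 1 \<longleftrightarrow> x 1 1)"
  proof (induction a rule: dec_induct)
    case (step a')
    then show ?case
      using rows[of a'] a by auto
  qed simp
  then show ?thesis by blast
qed

lemma balanced_xor_const:
  assumes "finite A" "2 * card {a \<in> A. P a} = card A"
  shows "2 * card {a \<in> A. P a \<noteq> z} = card A"
proof (cases z)
  case True
  have "card {a \<in> A. \<not> P a} + card {a \<in> A. P a} = card A"
    using assms(1) by (subst card_Un_disjoint[symmetric]) (auto intro: arg_cong[where f = card])
  with assms(2) True show ?thesis by simp
qed (use assms in simp)

lemma card_product_xor_balanced:
  assumes A: "finite A" and B: "finite B"
    and balanced: "2 * card {a \<in> A. r a} = card A \<or> 2 * card {b \<in> B. c b} = card B"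
  shows "2 * card {(a, b) \<in> A \<times> B. r a \<noteq> c b} = card A * card B"
proof -
  have "card {(a, b) \<in> A \<times> B. r a \<noteq> c b} = (\<Sum>(a, b)\<in>A \<times> B. of_bool (r a \<noteq> c b))"
    using A B by (simp add: Int_def case_prod_unfold mem_Times_iff)
  also have "\<dots> = (\<Sum>a\<in>A. \<Sum>b\<in>B. of_bool (r a \<noteq> c b))"
    by (rule sum.cartesian_product[symmetric])
  finally have double_sum: "card {(a, b) \<in> A \<times> B. r a \<noteq> c b} = \<dots>" .
  show ?thesis
    using balanced
  proof
    assume "2 * card {a \<in> A. r a} = card A"
    then have half_column: "2 * card {a \<in> A. r a \<noteq> c b} = card A" for b
      by (rule balanced_xor_const[OF A])
    have "2 * card {(a, b) \<in> A \<times> B. r a \<noteq> c b} = 2 * (\<Sum>b\<in>B. \<Sum>a\<in>A. of_bool (r a \<noteq> c b))"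
      unfolding double_sum by (subst sum.swap) (rule refl)
    also have "\<dots> = (\<Sum>b\<in>B. 2 * card {a \<in> A. r a \<noteq> c b})"
      using A by (simp add: sum_distrib_left Int_def)
    finally show ?thesis
      using half_column by simp
  next
    assume "2 * card {b \<in> B. c b} = card B"
    then have half_row: "2 * card {b \<in> B. c b \<noteq> r a} = card B" for a
      by (rule balanced_xor_const[OF B])
    have "2 * card {(a, b) \<in> A \<times> B. r a \<noteq> c b} = (\<Sum>a\<in>A. 2 * card {b \<in> B. c b \<noteq> r a})"
      unfolding double_sum using B by (simp add: sum_distrib_left Int_def eq_commute)
    then show ?thesis
      using half_row by simp
  qed
qed

lemma card_grid: "card (grid m) = 2^m"
proof -
  have "rowexp m + colexp m = m"
    unfolding rowexp_def colexp_def by presburger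
  then show ?thesis
    unfolding grid_def by (simp flip: power_add)
qed

lemma uRM_subset_grid: "X \<in> uRM m \<Longrightarrow> X \<subseteq> grid m"
  by (simp add: uRM_def)

lemma uRM_even_check: "X \<in> uRM m \<Longrightarrow> Q \<in> checks m \<Longrightarrow> even (card (X \<inter> Q))"
  by (simp add: uRM_def)

lemma uRM_bulk_parity:
  assumes X: "X \<in> uRM m" and "1 \<le> a" "a < 2^rowexp m" "1 \<le> b" "b < 2^colexp m"
  shows "((a, b) \<in> X \<longleftrightarrow> (Suc a, b) \<in> X) \<longleftrightarrow> ((a, Suc b) \<in> X \<longleftrightarrow> (Suc a, Suc b) \<in> X)"
proof -
  have "{(a, b), (a + 1, b), (a, b + 1), (a + 1, b + 1)} \<in> checks m"
    unfolding checks_def bulk_checks_def using assms(2-) by blast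
  with X have "even (card (X \<inter> {(a, b), (a + 1, b), (a, b + 1), (a + 1, b + 1)}))"
    by (rule uRM_even_check)
  then show ?thesis
    by (subst (asm) even_card_Int_four_iff) simp_all
qed

lemma uRM_xor_decomposition:
  assumes "X \<in> uRM m" "a \<in> {1..2^rowexp m}" "b \<in> {1..2^colexp m}"
  shows "(a, b) \<in> X \<longleftrightarrow> (((a, 1) \<in> X) \<noteq> (((1, b) \<in> X) \<noteq> ((1, 1) \<in> X)))"
  using grid_parity_decomposition[where x = "\<lambda>a b. (a, b) \<in> X", OF uRM_bulk_parity[OF assms(1)]] assms(2,3)
  by blast

lemma uRM_top_row_flips:
  assumes "X \<in> uRM m"
  shows "flips_by_valuation (colexp m) (\<lambda>b. (1, b) \<in> X)"
proof (rule line_checks_flips_by_valuation)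
  show "inj (\<lambda>b. (1::nat, b))"
    by (simp add: inj_def)
  show "\<forall>S\<in>line_checks (colexp m). even (card (X \<inter> (\<lambda>j. (1, nat j)) ` S))"
  proof
    fix S assume "S \<in> line_checks (colexp m)"
    then have "(\<lambda>j. (1, nat j)) ` S \<in> checks m"
      unfolding checks_def by blast
    then show "even (card (X \<inter> (\<lambda>j. (1, nat j)) ` S))"
      by (rule uRM_even_check[OF assms])
  qed
qed

lemma uRM_left_column_flips:
  assumes "X \<in> uRM m"
  shows "flips_by_valuation (rowexp m) (\<lambda>a. (a, 1) \<in> X)"
proof (rule line_checks_flips_by_valuation)
  show "inj (\<lambda>a. (a, 1::nat))"
    by (simp add: inj_def)
  show "\<forall>S\<in>line_checks (rowexp m). even (card (X \<inter> (\<lambda>j. (nat j, 1)) ` S))"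
  proof
    fix S assume "S \<in> line_checks (rowexp m)"
    then have "(\<lambda>j. (nat j, 1)) ` S \<in> checks m"
      unfolding checks_def by blast
    then show "even (card (X \<inter> (\<lambda>j. (nat j, 1)) ` S))"
      by (rule uRM_even_check[OF assms])
  qed
qed

lemma uRM_card_cases:
  assumes X: "X \<in> uRM m"
  shows "X = {} \<or> X = grid m \<or> 2 * card X = 2^m"
proof -
  define R C where "R = (2::nat)^rowexp m" and "C = (2::nat)^colexp m"
  define r c where "r a \<longleftrightarrow> (a, 1) \<in> X" and "c b \<longleftrightarrow> ((1, b) \<in> X) \<noteq> ((1, 1) \<in> X)" for a b
  have grid: "grid m = {1..R} \<times> {1..C}"
    unfolding grid_def R_def C_def ..
  have X_eq: "X = {(a, b) \<in> {1..R} \<times> {1..C}. r a \<noteq> c b}"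
  proof (rule set_eqI)
    fix p :: "nat \<times> nat"
    obtain a b where p: "p = (a, b)"
      by fastforce
    show "p \<in> X \<longleftrightarrow> p \<in> {(a, b) \<in> {1..R} \<times> {1..C}. r a \<noteq> c b}"
      using uRM_subset_grid[OF X] uRM_xor_decomposition[OF X, of a b]
      unfolding p grid r_def c_def R_def C_def by blast
  qed
  have "(\<forall>a\<in>{1..R}. r a = r 1) \<or> 2 * card {a \<in> {1..R}. r a} = R"
    using flips_by_valuation_constant_or_balanced[OF uRM_left_column_flips[OF X]]
    unfolding r_def R_def .
  moreover have "(\<forall>b\<in>{1..C}. \<not> c b) \<or> 2 * card {b \<in> {1..C}. c b} = C"
    using flips_by_valuation_constant_or_balanced[OF uRM_top_row_flips[OF X]]
  proof (elim disjE)
    assume "2 * card {b \<in> {1..2^colexp m}. (1, b) \<in> X} = 2^colexp m"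
    then have "2 * card {b \<in> {1..C}. c b} = card {1..C}"
      unfolding c_def C_def by (intro balanced_xor_const) simp_all
    then show ?thesis
      by simp
  qed (unfold c_def C_def, blast)
  ultimately consider "2 * card {a \<in> {1..R}. r a} = R \<or> 2 * card {b \<in> {1..C}. c b} = C"
    | "\<forall>a\<in>{1..R}. r a = r 1" "\<forall>b\<in>{1..C}. \<not> c b"
    by blast
  then show ?thesis
  proof cases
    case 1
    then have "2 * card X = card {1..R} * card {1..C}"
      unfolding X_eq by (intro card_product_xor_balanced) simp_all
    then show ?thesis
      using card_grid[of m] by (simp add: grid card_cartesian_product)
  next
    case 2
    then have "X = (if r 1 then grid m else {})"
      unfolding X_eq grid by auto
    then show ?thesis
      by (simp split: if_splits)
  qed
qed

lemma base_qubit_in_grid: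
  assumes "is_base m bq" "j \<le> m"
  shows "bq j \<in> grid m"
proof -
  have "(\<lambda>_\<in>{0..m}. True) \<in> (\<lambda>Y. \<lambda>k\<in>{0..m}. bq k \<in> Y) ` uRM m"
    using bij_betw_imp_surj_on[OF assms(1)[unfolded is_base_def]] by simp
  then obtain Y where "Y \<in> uRM m" "(\<lambda>_\<in>{0..m}. True) = (\<lambda>k\<in>{0..m}. bq k \<in> Y)"
    by blast
  moreover from fun_cong[OF this(2), of j] have "bq j \<in> Y"
    using assms(2) by simp
  ultimately show ?thesis
    using uRM_subset_grid by blast
qed

theorem lemma3:
  fixes m :: nat and bq :: "nat \<Rightarrow> nat \<times> nat" and i :: nat and X :: "(nat \<times> nat) set"
  assumes "m \<ge> 2"
    and "is_base m bq"
    and "i \<le> m"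
    and "X \<in> uRM m"
    and "bq i \<in> X"
    and "\<forall>j \<le> m. j \<noteq> i \<longrightarrow> bq j \<notin> X"
  shows "card X = 2 ^ (m - 1)"
proof -
  obtain j where j: "j \<le> m" "j \<noteq> i"
    using \<open>m \<ge> 2\<close> by (intro that[of "if i = 0 then 1 else 0"]) auto
  have "X \<noteq> {}"
    using \<open>bq i \<in> X\<close> by blast
  moreover have "X \<noteq> grid m"
    using base_qubit_in_grid[OF \<open>is_base m bq\<close> j(1)] assms(6) j by blast
  ultimately have "2 * card X = 2^m"
    using uRM_card_cases[OF \<open>X \<in> uRM m\<close>] by blast
  moreover have "2^m = 2 * (2::nat)^(m - 1)"
    using \<open>m \<ge> 2\<close> by (simp flip: power_Suc)
  ultimately show ?thesis
    by simp
qed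

end
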